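(* For any $p$-regular multigraph $G$ and any $T\in\mathrm{Sym}^p(\mathbb{R}^n)$, $\mathbb{E}_{W\sim\mathrm{Wig}}\, m^c_G(T+W)=m^!_G(T)$.
   Context: $\mathrm{Sym}^p(\mathbb{R}^n)$ is the space of real symmetric $p$-ary tensors of dimension $n$; $T_S$ denotes the entry indexed by a multiset $S$ of size $p$. $\mathrm{Wig}$ is the law of $W$ with $W_{i_1,\dots,i_p}=\frac{1}{\sqrt{p!}}\sum_{\pi\in S_p}G_{i_{\pi(1)},\dots,i_{\pi(p)}}$, $G$ with i.i.d. $\mathcal{N}(0,1)$ entries. Multigraphs $G=(V,E)$ may have loops and parallel edges (loop contributes 2 to degree). For $i\in[n]^E$, $i(\partial v)$ is the multiset of labels of edges at $v$ (loops counted twice). With $b=|E|$, $m^!_G(T)=\sum_{i\in[n]^E,\ i_1,\dots,i_b\text{ distinct}}\prod_{v\in V}T_{i(\partial v)}$ (equal to $1$ for the empty graph). A Frobenius pair is a connected component consisting of two vertices joined by $p$ parallel edges; with $U$ the set of vertices in Frobenius pairs and $i(\pi)$ the multiset of edge labels of a pair $\pi$, $m^c_G(T)=\sum_{i\text{ distinct}}\big[\prod_{v\in V\setminus U}T_{i(\partial v)}\prod_\pi(T_{i(\pi)}^2-1)\big]$, the product over Frobenius pairs $\pi$. *)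

theory Defs
  imports "HOL-Probability.Probability" "HOL-Library.Multiset" "HOL-Combinatorics.Permutations"
begin

text \<open>A symmetric p-ary tensor of dimension n is represented as a function
  T :: nat multiset => real; only its values on multisets of size p with
  elements in {0..<n} are ever used.\<close>

definition tuples :: "nat \<Rightarrow> nat \<Rightarrow> (nat \<Rightarrow> nat) set" where
  "tuples p n = {..<p} \<rightarrow>\<^sub>E {..<n}"

definition gauss_space :: "nat \<Rightarrow> nat \<Rightarrow> ((nat \<Rightarrow> nat) \<Rightarrow> real) measure" where
  "gauss_space p n = PiM (tuples p n) (\<lambda>_. density lborel std_normal_density)"

text \<open>The Wigner tensor W built from G: W_{i_1..i_p} = (1/sqrt p!) sum over permutations
  of G_{i_pi(1)..i_pi(p)}; the entry at multiset S is computed from the sorted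
  representative sequence of S.\<close>
definition wig :: "nat \<Rightarrow> ((nat \<Rightarrow> nat) \<Rightarrow> real) \<Rightarrow> nat multiset \<Rightarrow> real" where
  "wig p G S = (1 / sqrt (fact p)) *
     (\<Sum>\<pi> | \<pi> permutes {..<p}. G (restrict (\<lambda>k. sorted_list_of_multiset S ! (\<pi> k)) {..<p}))"

text \<open>A multigraph with vertex set {0..<nv} and edge set {0..<b}; edge e has
  endpoints ends e (a loop if both are equal).\<close>

definition inc :: "(nat \<Rightarrow> nat \<times> nat) \<Rightarrow> nat \<Rightarrow> nat \<Rightarrow> nat" where
  "inc ends e v = (if fst (ends e) = v then 1 else 0) + (if snd (ends e) = v then 1 else 0)"

definition multigraph :: "nat \<Rightarrow> nat \<Rightarrow> (nat \<Rightarrow> nat \<times> nat) \<Rightarrow> bool" where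
  "multigraph nv b ends = (\<forall>e<b. fst (ends e) < nv \<and> snd (ends e) < nv)"

definition regular :: "nat \<Rightarrow> nat \<Rightarrow> nat \<Rightarrow> (nat \<Rightarrow> nat \<times> nat) \<Rightarrow> bool" where
  "regular p nv b ends = (\<forall>v<nv. (\<Sum>e<b. inc ends e v) = p)"

text \<open>i(\<partial>v): multiset of labels of edges at v (loops counted twice).\<close>
definition star_labels :: "nat \<Rightarrow> (nat \<Rightarrow> nat \<times> nat) \<Rightarrow> (nat \<Rightarrow> nat) \<Rightarrow> nat \<Rightarrow> nat multiset" where
  "star_labels b ends i v = (\<Sum>e<b. replicate_mset (inc ends e v) (i e))"

definition dist_labelings :: "nat \<Rightarrow> nat \<Rightarrow> (nat \<Rightarrow> nat) set" where
  "dist_labelings n b = {i \<in> {..<b} \<rightarrow>\<^sub>E {..<n}. inj_on i {..<b}}"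

definition m_inj :: "nat \<Rightarrow> nat \<Rightarrow> nat \<Rightarrow> (nat \<Rightarrow> nat \<times> nat) \<Rightarrow> (nat multiset \<Rightarrow> real) \<Rightarrow> real" where
  "m_inj n nv b ends T = (\<Sum>i\<in>dist_labelings n b. \<Prod>v<nv. T (star_labels b ends i v))"

text \<open>{u,v} is a Frobenius pair: a connected component consisting of the two
  distinct vertices u, v joined by p parallel edges (every edge at u or v joins u and v,
  and there are exactly p of them).\<close>
definition frob_pair :: "nat \<Rightarrow> nat \<Rightarrow> nat \<Rightarrow> (nat \<Rightarrow> nat \<times> nat) \<Rightarrow> nat \<Rightarrow> nat \<Rightarrow> bool" where
  "frob_pair p nv b ends u v =
     (u \<noteq> v \<and> u < nv \<and> v < nv \<and>
      (\<forall>e<b. (inc ends e u > 0 \<or> inc ends e v > 0) \<longrightarrow> ends e = (u, v) \<or> ends e = (v, u)) \<and>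
      card {e. e < b \<and> (ends e = (u, v) \<or> ends e = (v, u))} = p)"

definition frob_pairs :: "nat \<Rightarrow> nat \<Rightarrow> nat \<Rightarrow> (nat \<Rightarrow> nat \<times> nat) \<Rightarrow> nat set set" where
  "frob_pairs p nv b ends = {{u, v} | u v. frob_pair p nv b ends u v}"

definition frob_vertices :: "nat \<Rightarrow> nat \<Rightarrow> nat \<Rightarrow> (nat \<Rightarrow> nat \<times> nat) \<Rightarrow> nat set" where
  "frob_vertices p nv b ends = \<Union> (frob_pairs p nv b ends)"

definition pair_labels :: "nat \<Rightarrow> (nat \<Rightarrow> nat \<times> nat) \<Rightarrow> (nat \<Rightarrow> nat) \<Rightarrow> nat set \<Rightarrow> nat multiset" where
  "pair_labels b ends i P = image_mset i (mset_set {e. e < b \<and> fst (ends e) \<in> P \<and> snd (ends e) \<in> P})"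

definition m_c :: "nat \<Rightarrow> nat \<Rightarrow> nat \<Rightarrow> nat \<Rightarrow> (nat \<Rightarrow> nat \<times> nat) \<Rightarrow> (nat multiset \<Rightarrow> real) \<Rightarrow> real" where
  "m_c p n nv b ends T = (\<Sum>i\<in>dist_labelings n b.
      (\<Prod>v\<in>{..<nv} - frob_vertices p nv b ends. T (star_labels b ends i v)) *
      (\<Prod>P\<in>frob_pairs p nv b ends. (T (pair_labels b ends i P))\<^sup>2 - 1))"

end

theory Submission
  imports Defs
begin

text \<open>
  Expanding \<open>m\<^sup>c\<^sub>G(T + W)\<close> over distinct labellings \<open>i\<close>, each summand is a product of factors
  \<open>T\<^sub>S + W\<^sub>S\<close>, one for each vertex outside the Frobenius pairs (with \<open>S = i(\<partial>v)\<close>), and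
  \<open>(T\<^sub>S + W\<^sub>S)\<^sup>2 - 1\<close>, one for each Frobenius pair (with \<open>S = i(\<pi>)\<close>). These multisets \<open>S\<close> are
  pairwise distinct: two vertices carrying the same multiset of distinct labels share all their
  \<open>p\<close> edges, i.e. form a Frobenius pair. Entries of \<open>W\<close> at distinct multisets are sums over
  disjoint sets of coordinates of \<open>G\<close>, hence independent, so the expectation factorises.
  \<open>W\<^sub>S\<close> is centred, and for a multiset without repetitions (as \<open>i(\<pi>)\<close> is) it is a normalised
  sum of \<open>p!\<close> distinct standard Gaussians, so \<open>E W\<^sub>S\<^sup>2 = 1\<close> and the pair factor has mean \<open>T\<^sub>S\<^sup>2\<close>.
  Both vertices of a Frobenius pair carry \<open>i(\<pi>)\<close>, so the product of the means is
  \<open>\<Prod>\<^sub>v T\<^bsub>i(\<partial>v)\<^esub>\<close>.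
\<close>

section \<open>Coordinates of product probability spaces\<close>

lemma indep_vars_PiM_components:
  assumes "\<And>i. i \<in> I \<Longrightarrow> prob_space (M i)"
  shows "prob_space.indep_vars (PiM I M) M (\<lambda>i \<omega>. \<omega> i) I"
proof -
  interpret P: prob_space "PiM I M" by (rule prob_space_PiM) (use assms in auto)
  show ?thesis
  proof (cases "I = {}")
    case True
    then show ?thesis unfolding P.indep_vars_def P.indep_sets_def by simp
  next
    case False
    have "distr (PiM I M) (PiM I M) (\<lambda>\<omega>. \<lambda>i\<in>I. \<omega> i) = distr (PiM I M) (PiM I M) (\<lambda>\<omega>. \<omega>)"
      by (rule distr_cong) (auto simp: space_PiM PiE_def extensional_restrict)
    also have "\<dots> = PiM I (\<lambda>i. distr (PiM I M) (M i) (\<lambda>\<omega>. \<omega> i))"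
      by (simp add: distr_PiM_component assms cong: PiM_cong)
    finally show ?thesis
      by (subst P.indep_vars_iff_distr_eq_PiM'[OF False]) auto
  qed
qed

lemma
  fixes f :: "'a \<Rightarrow> 'b::{banach, second_countable_topology}"
  assumes "\<And>i. i \<in> I \<Longrightarrow> prob_space (M i)" "i \<in> I" "f \<in> borel_measurable (M i)"
  shows integrable_PiM_component_iff: "integrable (PiM I M) (\<lambda>\<omega>. f (\<omega> i)) \<longleftrightarrow> integrable (M i) f"
    and integral_PiM_component: "(\<integral>\<omega>. f (\<omega> i) \<partial>PiM I M) = (\<integral>x. f x \<partial>M i)"
proof -
  have component: "(\<lambda>\<omega>. \<omega> i) \<in> measurable (PiM I M) (M i)"
    using assms(2) by simp
  show "integrable (PiM I M) (\<lambda>\<omega>. f (\<omega> i)) \<longleftrightarrow> integrable (M i) f"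
    using integrable_distr_eq[OF component assms(3)] by (simp add: distr_PiM_component assms)
  show "(\<integral>\<omega>. f (\<omega> i) \<partial>PiM I M) = (\<integral>x. f x \<partial>M i)"
    using integral_distr[OF component assms(3)] by (simp add: distr_PiM_component assms)
qed

abbreviation std_normal_measure :: "real measure" where
  "std_normal_measure \<equiv> density lborel std_normal_density"

lemma prob_space_std_normal_measure: "prob_space std_normal_measure"
  using prob_space_normal_density[of 1 0] by simp

lemma integrable_std_normal_measure_power: "integrable std_normal_measure (\<lambda>x. x ^ k)"
  by (subst integrable_density) (auto simp: integrable_std_normal_moment)

lemma integral_std_normal_measure_ident: "(\<integral>x. x \<partial>std_normal_measure) = 0"
  using integral_std_normal_moment_odd[of 0] by (subst integral_density) auto

lemma integral_std_normal_measure_square: "(\<integral>x. x\<^sup>2 \<partial>std_normal_measure) = 1"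
  using integral_std_normal_moment_even[of 1] by (subst integral_density) auto

lemma measurable_std_normal_component:
  "t \<in> I \<Longrightarrow> (\<lambda>G. G t) \<in> borel_measurable (PiM I (\<lambda>_. std_normal_measure))"
  using measurable_component_singleton[of t I "\<lambda>_. std_normal_measure"]
  by (simp add: measurable_cong_sets[OF refl sets_density])

lemma
  assumes "t \<in> I"
  shows integrable_std_normal_component_power:
      "integrable (PiM I (\<lambda>_. std_normal_measure)) (\<lambda>G. G t ^ k)"
    and integral_std_normal_component_power:
      "(\<integral>G. G t ^ k \<partial>PiM I (\<lambda>_. std_normal_measure)) = (\<integral>x. x ^ k \<partial>std_normal_measure)"
  using integrable_PiM_component_iff[of I "\<lambda>_. std_normal_measure" t "\<lambda>x. x ^ k"]
    integral_PiM_component[of I "\<lambda>_. std_normal_measure" t "\<lambda>x. x ^ k"]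
    prob_space_std_normal_measure integrable_std_normal_measure_power assms
  by simp_all

lemma
  assumes "s \<in> I" "t \<in> I"
  shows integrable_std_normal_component_mult:
      "integrable (PiM I (\<lambda>_. std_normal_measure)) (\<lambda>G. G s * G t)"
    and integral_std_normal_component_mult:
      "(\<integral>G. G s * G t \<partial>PiM I (\<lambda>_. std_normal_measure)) = (if s = t then 1 else 0)"
proof -
  interpret P: prob_space "PiM I (\<lambda>_. std_normal_measure)"
    by (rule prob_space_PiM) (rule prob_space_std_normal_measure)
  have indep: "P.indep_vars (\<lambda>_. borel) (\<lambda>t G. G t) {s, t}"
  proof -
    have "P.indep_vars (\<lambda>_. std_normal_measure) (\<lambda>t G. G t) {s, t}"
      by (rule P.indep_vars_subset[OF indep_vars_PiM_components])
        (use assms prob_space_std_normal_measure in auto)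
    then show ?thesis
      by (rule P.indep_vars_compose2[where Y = "\<lambda>_ x. x", simplified]) simp
  qed
  have integrable: "integrable (PiM I (\<lambda>_. std_normal_measure)) (\<lambda>G. G j)" if "j \<in> {s, t}" for j
    using integrable_std_normal_component_power[of j I 1] that assms by auto
  show "integrable (PiM I (\<lambda>_. std_normal_measure)) (\<lambda>G. G s * G t)"
  proof (cases "s = t")
    case True
    then show ?thesis
      using integrable_std_normal_component_power[OF assms(1), of 2] by (simp add: power2_eq_square)
  next
    case False
    then show ?thesis using P.indep_vars_integrable[OF _ indep integrable] by simp
  qed
  show "(\<integral>G. G s * G t \<partial>PiM I (\<lambda>_. std_normal_measure)) = (if s = t then 1 else 0)"
  proof (cases "s = t")
    case True
    then show ?thesis
      using integral_std_normal_component_power[OF assms(1), of 2] integral_std_normal_measure_square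
      by (simp add: power2_eq_square)
  next
    case False
    have "(\<integral>G. G j \<partial>PiM I (\<lambda>_. std_normal_measure)) = 0" if "j \<in> {s, t}" for j
      using integral_std_normal_component_power[of j I 1] integral_std_normal_measure_ident that assms
      by auto
    then show ?thesis using P.indep_vars_lebesgue_integral[OF _ indep integrable] False by simp
  qed
qed

section \<open>Entries of the Wigner tensor\<close>

lemma prob_space_gauss_space: "prob_space (gauss_space p n)"
  unfolding gauss_space_def by (rule prob_space_PiM) (rule prob_space_std_normal_measure)

definition index_msets :: "nat \<Rightarrow> nat \<Rightarrow> nat multiset set" where
  "index_msets p n = {S. size S = p \<and> set_mset S \<subseteq> {..<n}}"

definition permuted_tuple :: "nat \<Rightarrow> nat multiset \<Rightarrow> (nat \<Rightarrow> nat) \<Rightarrow> nat \<Rightarrow> nat" where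
  "permuted_tuple p S \<pi> = restrict (\<lambda>k. sorted_list_of_multiset S ! \<pi> k) {..<p}"

definition permuted_tuples :: "nat \<Rightarrow> nat multiset \<Rightarrow> (nat \<Rightarrow> nat) set" where
  "permuted_tuples p S = permuted_tuple p S ` {\<pi>. \<pi> permutes {..<p}}"

lemma length_sorted_list_of_multiset [simp]: "length (sorted_list_of_multiset S) = size S"
  by (metis mset_sorted_list_of_multiset size_mset)

lemma wig_eq_sum_permuted_tuple:
  "wig p G S = 1 / sqrt (fact p) * (\<Sum>\<pi> | \<pi> permutes {..<p}. G (permuted_tuple p S \<pi>))"
  by (simp add: wig_def permuted_tuple_def)

lemma wig_restrict:
  assumes "permuted_tuples p S \<subseteq> J"
  shows "wig p (restrict G J) S = wig p G S"
  using assms by (auto simp: wig_eq_sum_permuted_tuple permuted_tuples_def intro!: sum.cong)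

lemma permuted_tuples_subset_tuples:
  assumes "S \<in> index_msets p n"
  shows "permuted_tuples p S \<subseteq> tuples p n"
proof
  fix t assume "t \<in> permuted_tuples p S"
  then obtain \<pi> where \<pi>: "\<pi> permutes {..<p}" and t: "t = permuted_tuple p S \<pi>"
    by (auto simp: permuted_tuples_def)
  have "sorted_list_of_multiset S ! \<pi> k < n" if "k < p" for k
  proof -
    have "\<pi> k < size S"
      using that assms \<pi> permutes_in_image[of \<pi> "{..<p}" k] by (simp add: index_msets_def)
    then have "sorted_list_of_multiset S ! \<pi> k \<in># S"
      using nth_mem[of "\<pi> k" "sorted_list_of_multiset S"] by simp
    then show ?thesis using assms by (auto simp: index_msets_def)
  qed
  then show "t \<in> tuples p n" by (simp add: t tuples_def permuted_tuple_def)
qed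

lemma image_mset_permuted_tuple:
  assumes "size S = p" "\<pi> permutes {..<p}"
  shows "image_mset (permuted_tuple p S \<pi>) (mset_set {..<p}) = S"
proof -
  define xs where "xs = sorted_list_of_multiset S"
  have "image_mset (permuted_tuple p S \<pi>) (mset_set {..<p}) = image_mset ((!) xs) (image_mset \<pi> (mset_set {..<p}))"
    by (auto simp: permuted_tuple_def xs_def multiset.map_comp intro!: image_mset_cong)
  also have "\<dots> = image_mset ((!) xs) (mset [0..<length xs])"
    using assms by (simp add: permutes_image_mset xs_def atLeast0LessThan)
  also have "\<dots> = S"
    by (metis map_nth mset_map mset_sorted_list_of_multiset xs_def)
  finally show ?thesis .
qed

lemma permuted_tuples_disjoint:
  assumes "size S = p" "size S' = p" "S \<noteq> S'"
  shows "permuted_tuples p S \<inter> permuted_tuples p S' = {}"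
proof -
  have "S = S'"
    if "\<pi> permutes {..<p}" "\<sigma> permutes {..<p}" "permuted_tuple p S \<pi> = permuted_tuple p S' \<sigma>" for \<pi> \<sigma>
    using image_mset_permuted_tuple[OF assms(1) that(1)] image_mset_permuted_tuple[OF assms(2) that(2)] that(3)
    by simp
  then show ?thesis using assms(3) by (auto simp: permuted_tuples_def)
qed

lemma inj_on_permuted_tuple:
  assumes "finite A" "card A = p"
  shows "inj_on (permuted_tuple p (mset_set A)) {\<pi>. \<pi> permutes {..<p}}"
proof
  fix \<pi> \<sigma> assume \<pi>: "\<pi> \<in> {\<pi>. \<pi> permutes {..<p}}" and \<sigma>: "\<sigma> \<in> {\<pi>. \<pi> permutes {..<p}}"
    and eq: "permuted_tuple p (mset_set A) \<pi> = permuted_tuple p (mset_set A) \<sigma>"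
  define xs where "xs = sorted_list_of_set A"
  have xs: "distinct xs" "length xs = p"
    using assms by (simp_all add: xs_def)
  show "\<pi> = \<sigma>"
  proof
    fix k
    show "\<pi> k = \<sigma> k"
    proof (cases "k < p")
      case True
      have "\<pi> k < p" "\<sigma> k < p"
        using True \<pi> \<sigma> permutes_in_image[of \<pi> "{..<p}" k] permutes_in_image[of \<sigma> "{..<p}" k]
        by simp_all
      moreover have "xs ! \<pi> k = xs ! \<sigma> k"
        using fun_cong[OF eq, of k] True by (simp add: permuted_tuple_def xs_def)
      ultimately show ?thesis using nth_eq_iff_index_eq xs by metis
    next
      case False
      then show ?thesis using permutes_not_in \<pi> \<sigma> by (metis lessThan_iff mem_Collect_eq)
    qed
  qed
qed

lemma measurable_wig:
  assumes "permuted_tuples p S \<subseteq> J"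
  shows "(\<lambda>G. wig p G S) \<in> borel_measurable (PiM J (\<lambda>_. std_normal_measure))"
  unfolding wig_eq_sum_permuted_tuple
  by (intro borel_measurable_times borel_measurable_const borel_measurable_sum measurable_std_normal_component)
    (use assms in \<open>auto simp: permuted_tuples_def\<close>)

lemma indep_vars_wig:
  assumes "\<M> \<subseteq> index_msets p n"
  shows "prob_space.indep_vars (gauss_space p n) (\<lambda>_. borel) (\<lambda>S G. wig p G S) \<M>"
proof -
  interpret P: prob_space "gauss_space p n"
    by (rule prob_space_gauss_space)
  have blocks: "permuted_tuples p S \<subseteq> tuples p n" if "S \<in> \<M>" for S
    using assms that permuted_tuples_subset_tuples by blast
  have disjoint: "disjoint_family_on (permuted_tuples p) \<M>"
    unfolding disjoint_family_on_def
  proof (intro ballI impI)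
    fix S S' assume "S \<in> \<M>" "S' \<in> \<M>" "S \<noteq> S'"
    then show "permuted_tuples p S \<inter> permuted_tuples p S' = {}"
      using assms by (intro permuted_tuples_disjoint) (auto simp: index_msets_def)
  qed
  have coordinates: "P.indep_vars (\<lambda>_. std_normal_measure) (\<lambda>t G. G t) (tuples p n)"
    using indep_vars_PiM_components[of "tuples p n" "\<lambda>_. std_normal_measure"] prob_space_std_normal_measure
    unfolding gauss_space_def by simp
  have "P.indep_vars (\<lambda>S. PiM (permuted_tuples p S) (\<lambda>_. std_normal_measure))
      (\<lambda>S G. restrict (\<lambda>t. G t) (permuted_tuples p S)) \<M>"
    by (rule P.indep_vars_restrict[OF coordinates blocks disjoint])
  then have "P.indep_vars (\<lambda>_. borel) (\<lambda>S G. wig p (restrict G (permuted_tuples p S)) S) \<M>"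
    by (rule P.indep_vars_compose2) (simp add: measurable_wig)
  moreover have "(\<lambda>S G. wig p (restrict G (permuted_tuples p S)) S) = (\<lambda>S G. wig p G S)"
    by (intro ext wig_restrict subset_refl)
  ultimately show ?thesis
    by (simp only:)
qed

lemma
  fixes h :: "nat multiset \<Rightarrow> real \<Rightarrow> real"
  assumes "finite \<M>" "\<M> \<subseteq> index_msets p n" "\<And>S. S \<in> \<M> \<Longrightarrow> h S \<in> borel_measurable borel"
    and integrable: "\<And>S. S \<in> \<M> \<Longrightarrow> integrable (gauss_space p n) (\<lambda>G. h S (wig p G S))"
  shows integrable_prod_wig: "integrable (gauss_space p n) (\<lambda>G. \<Prod>S\<in>\<M>. h S (wig p G S))"
    and integral_prod_wig: "(\<integral>G. (\<Prod>S\<in>\<M>. h S (wig p G S)) \<partial>gauss_space p n) =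
      (\<Prod>S\<in>\<M>. \<integral>G. h S (wig p G S) \<partial>gauss_space p n)"
proof -
  interpret P: prob_space "gauss_space p n"
    by (rule prob_space_gauss_space)
  have indep: "P.indep_vars (\<lambda>_. borel) (\<lambda>S G. h S (wig p G S)) \<M>"
    using assms(3) by (rule P.indep_vars_compose2[OF indep_vars_wig[OF assms(2)]])
  show "integrable (gauss_space p n) (\<lambda>G. \<Prod>S\<in>\<M>. h S (wig p G S))"
    by (rule P.indep_vars_integrable[OF assms(1) indep integrable])
  show "(\<integral>G. (\<Prod>S\<in>\<M>. h S (wig p G S)) \<partial>gauss_space p n) =
      (\<Prod>S\<in>\<M>. \<integral>G. h S (wig p G S) \<partial>gauss_space p n)"
    by (rule P.indep_vars_lebesgue_integral[OF assms(1) indep integrable])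
qed

lemma
  assumes "S \<in> index_msets p n"
  shows integrable_wig: "integrable (gauss_space p n) (\<lambda>G. wig p G S)"
    and integral_wig: "(\<integral>G. wig p G S \<partial>gauss_space p n) = 0"
proof -
  have "permuted_tuple p S \<pi> \<in> tuples p n" if "\<pi> permutes {..<p}" for \<pi>
    using permuted_tuples_subset_tuples[OF assms] that by (auto simp: permuted_tuples_def)
  then have integrable: "integrable (gauss_space p n) (\<lambda>G. G (permuted_tuple p S \<pi>))"
    and integral: "(\<integral>G. G (permuted_tuple p S \<pi>) \<partial>gauss_space p n) = 0" if "\<pi> permutes {..<p}" for \<pi>
    using that integrable_std_normal_component_power[of _ "tuples p n" 1]
      integral_std_normal_component_power[of _ "tuples p n" 1] integral_std_normal_measure_ident
    by (simp_all add: gauss_space_def)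
  show "integrable (gauss_space p n) (\<lambda>G. wig p G S)"
    unfolding wig_eq_sum_permuted_tuple
    by (intro integrable_mult_right Bochner_Integration.integrable_sum) (simp add: integrable)
  show "(\<integral>G. wig p G S \<partial>gauss_space p n) = 0"
    unfolding wig_eq_sum_permuted_tuple by (simp add: integrable integral Bochner_Integration.integral_sum)
qed

lemma
  assumes "finite A" "card A = p" "A \<subseteq> {..<n}"
  shows integrable_wig_square: "integrable (gauss_space p n) (\<lambda>G. (wig p G (mset_set A))\<^sup>2)"
    and integral_wig_square: "(\<integral>G. (wig p G (mset_set A))\<^sup>2 \<partial>gauss_space p n) = 1"
proof -
  define Perms where "Perms = {\<pi>. \<pi> permutes {..<p}}"
  define t where "t = permuted_tuple p (mset_set A)"
  have "finite Perms" "card Perms = fact p"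
    by (simp_all add: Perms_def finite_permutations card_permutations)
  have square: "(wig p G (mset_set A))\<^sup>2 = 1 / fact p * (\<Sum>\<pi>\<in>Perms. \<Sum>\<sigma>\<in>Perms. G (t \<pi>) * G (t \<sigma>))" for G
    by (simp add: wig_eq_sum_permuted_tuple power2_eq_square sum_product Perms_def t_def)
  have tuple: "t \<pi> \<in> tuples p n" if "\<pi> \<in> Perms" for \<pi>
    using permuted_tuples_subset_tuples[of "mset_set A" p n] assms that
    by (auto simp: index_msets_def permuted_tuples_def Perms_def t_def)
  have tuple_eq: "t \<pi> = t \<sigma> \<longleftrightarrow> \<pi> = \<sigma>" if "\<pi> \<in> Perms" "\<sigma> \<in> Perms" for \<pi> \<sigma>
    using inj_on_permuted_tuple[OF assms(1,2)] that unfolding Perms_def t_def inj_on_def by blast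
  have integrable: "integrable (gauss_space p n) (\<lambda>G. G (t \<pi>) * G (t \<sigma>))"
    and integral: "(\<integral>G. G (t \<pi>) * G (t \<sigma>) \<partial>gauss_space p n) = (if \<pi> = \<sigma> then 1 else 0)"
    if "\<pi> \<in> Perms" "\<sigma> \<in> Perms" for \<pi> \<sigma>
    using integrable_std_normal_component_mult[OF tuple[OF that(1)] tuple[OF that(2)]]
      integral_std_normal_component_mult[OF tuple[OF that(1)] tuple[OF that(2)]] tuple_eq[OF that]
    by (simp_all add: gauss_space_def)
  show "integrable (gauss_space p n) (\<lambda>G. (wig p G (mset_set A))\<^sup>2)"
    unfolding square
    by (intro integrable_mult_right Bochner_Integration.integrable_sum) (simp add: integrable)
  show "(\<integral>G. (wig p G (mset_set A))\<^sup>2 \<partial>gauss_space p n) = 1"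
    using \<open>finite Perms\<close> \<open>card Perms = fact p\<close>
    by (simp add: square integrable integral Bochner_Integration.integral_sum)
qed

lemma
  assumes "S \<in> index_msets p n"
  shows integrable_shifted_wig: "integrable (gauss_space p n) (\<lambda>G. a + wig p G S)"
    and integral_shifted_wig: "(\<integral>G. a + wig p G S \<partial>gauss_space p n) = a"
proof -
  interpret P: prob_space "gauss_space p n"
    by (rule prob_space_gauss_space)
  show "integrable (gauss_space p n) (\<lambda>G. a + wig p G S)"
    and "(\<integral>G. a + wig p G S \<partial>gauss_space p n) = a"
    using integrable_wig[OF assms] integral_wig[OF assms] by (simp_all add: P.prob_space)
qed

lemma
  assumes "finite A" "card A = p" "A \<subseteq> {..<n}"
  shows integrable_shifted_wig_square:
      "integrable (gauss_space p n) (\<lambda>G. (a + wig p G (mset_set A))\<^sup>2 - 1)"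
    and integral_shifted_wig_square:
      "(\<integral>G. (a + wig p G (mset_set A))\<^sup>2 - 1 \<partial>gauss_space p n) = a\<^sup>2"
proof -
  interpret P: prob_space "gauss_space p n"
    by (rule prob_space_gauss_space)
  have S: "mset_set A \<in> index_msets p n"
    using assms by (auto simp: index_msets_def)
  have expand: "(a + x)\<^sup>2 - 1 = (a\<^sup>2 - 1) + 2 * a * x + x\<^sup>2" for x :: real
    by (simp add: power2_eq_square algebra_simps)
  show "integrable (gauss_space p n) (\<lambda>G. (a + wig p G (mset_set A))\<^sup>2 - 1)"
    and "(\<integral>G. (a + wig p G (mset_set A))\<^sup>2 - 1 \<partial>gauss_space p n) = a\<^sup>2"
    unfolding expand
    using integrable_wig[OF S] integral_wig[OF S] integrable_wig_square[OF assms] integral_wig_square[OF assms]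
    by (simp_all add: P.prob_space)
qed

section \<open>Frobenius pairs and the labels at vertices\<close>

lemma count_star_labels:
  assumes "inj_on i {..<b}" "e < b"
  shows "count (star_labels b ends i v) (i e) = inc ends e v"
proof -
  have "count (star_labels b ends i v) (i e) = (\<Sum>e'<b. if e' = e then inc ends e' v else 0)"
    unfolding star_labels_def count_sum
  proof (intro sum.cong refl)
    fix e' assume "e' \<in> {..<b}"
    then have "i e' = i e \<longleftrightarrow> e' = e"
      using assms inj_onD[OF assms(1)] by auto
    then show "count (replicate_mset (inc ends e' v) (i e')) (i e) = (if e' = e then inc ends e' v else 0)"
      by auto
  qed
  then show ?thesis using assms(2) by simp
qed

lemma star_labels_eq_image_mset:
  assumes "E \<subseteq> {..<b}" "\<And>e. e < b \<Longrightarrow> inc ends e v = (if e \<in> E then 1 else 0)"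
  shows "star_labels b ends i v = image_mset i (mset_set E)"
proof -
  have "star_labels b ends i v = (\<Sum>e<b. if e \<in> E then {#i e#} else {#})"
    unfolding star_labels_def using assms(2) by (intro sum.cong) auto
  also have "\<dots> = (\<Sum>e\<in>E. {#i e#})"
    using assms(1) by (simp add: sum.If_cases Int_absorb1)
  also have "\<dots> = image_mset i (mset_set E)"
    using finite_subset[OF assms(1)] by (induction E rule: finite_induct) simp_all
  finally show ?thesis .
qed

lemma size_star_labels:
  assumes "regular p nv b ends" "v < nv"
  shows "size (star_labels b ends i v) = p"
proof -
  have "size (star_labels b ends i v) = (\<Sum>e<b. inc ends e v)"
    unfolding star_labels_def by (induction b) simp_all
  then show ?thesis using assms by (simp add: regular_def)
qed

lemma set_star_labels_subset:
  assumes "i \<in> {..<b} \<rightarrow>\<^sub>E {..<n}"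
  shows "set_mset (star_labels b ends i v) \<subseteq> {..<n}"
  using assms by (auto simp: star_labels_def set_mset_sum split: if_splits)

lemma frob_pair_sym: "frob_pair p nv b ends u v \<Longrightarrow> frob_pair p nv b ends v u"
  unfolding frob_pair_def by (auto simp: conj_commute disj_commute)

lemma inc_frob_pair:
  assumes "frob_pair p nv b ends u v" "e < b"
  shows "inc ends e u = (if ends e = (u, v) \<or> ends e = (v, u) then 1 else 0)"
  using assms unfolding frob_pair_def by (cases "ends e") (auto simp: inc_def)

lemma frob_pairI_inc_eq:
  assumes "regular p nv b ends" "u \<noteq> v" "u < nv" "v < nv"
    and same_inc: "\<And>e. e < b \<Longrightarrow> inc ends e u = inc ends e v"
  shows "frob_pair p nv b ends u v"
proof -
  have inc_u: "inc ends e u = (if ends e = (u, v) \<or> ends e = (v, u) then 1 else 0)" if "e < b" for e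
    using same_inc[OF that] \<open>u \<noteq> v\<close> by (cases "ends e") (auto simp: inc_def split: if_splits)
  have "p = (\<Sum>e<b. inc ends e u)"
    using assms(1,3) by (simp add: regular_def)
  also have "\<dots> = card {e. e < b \<and> (ends e = (u, v) \<or> ends e = (v, u))}"
    by (simp add: inc_u sum.If_cases lessThan_def Collect_conj_eq)
  finally have "card {e. e < b \<and> (ends e = (u, v) \<or> ends e = (v, u))} = p" ..
  moreover have "ends e = (u, v) \<or> ends e = (v, u)" if "e < b" "inc ends e u > 0 \<or> inc ends e v > 0" for e
    using that same_inc[OF that(1)] inc_u[OF that(1)] by (auto split: if_splits)
  ultimately show ?thesis
    using assms(2-4) unfolding frob_pair_def by blast
qed

lemma frob_pair_iff_star_labels_eq:
  assumes "regular p nv b ends" "inj_on i {..<b}" "u \<noteq> v" "u < nv" "v < nv"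
  shows "frob_pair p nv b ends u v \<longleftrightarrow> star_labels b ends i u = star_labels b ends i v"
proof
  assume uv: "frob_pair p nv b ends u v"
  have "inc ends e u = inc ends e v" if "e < b" for e
    using inc_frob_pair[OF uv that] inc_frob_pair[OF frob_pair_sym[OF uv] that] by auto
  then show "star_labels b ends i u = star_labels b ends i v"
    unfolding star_labels_def by (intro sum.cong) auto
next
  assume eq: "star_labels b ends i u = star_labels b ends i v"
  have "inc ends e u = inc ends e v" if "e < b" for e
    using count_star_labels[OF assms(2) that, of ends u] count_star_labels[OF assms(2) that, of ends v] eq
    by simp
  then show "frob_pair p nv b ends u v"
    by (rule frob_pairI_inc_eq[OF assms(1,3-5)])
qed

lemma frob_pair_in_frob_pairs: "frob_pair p nv b ends u v \<Longrightarrow> {u, v} \<in> frob_pairs p nv b ends"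
  unfolding frob_pairs_def by blast

lemma frob_pair_in_frob_vertices:
  "frob_pair p nv b ends u v \<Longrightarrow> u \<in> frob_vertices p nv b ends"
  unfolding frob_vertices_def using frob_pair_in_frob_pairs by blast

lemma frob_pairsE:
  assumes "P \<in> frob_pairs p nv b ends" "u \<in> P"
  obtains v where "P = {u, v}" "frob_pair p nv b ends u v"
proof -
  obtain x y where P: "P = {x, y}" and xy: "frob_pair p nv b ends x y"
    using assms(1) unfolding frob_pairs_def by blast
  show thesis
  proof (cases "u = x")
    case True
    then show ?thesis using that P xy by blast
  next
    case False
    then have "u = y" using assms(2) P by blast
    then show ?thesis using that[of x] P frob_pair_sym[OF xy] by (simp add: insert_commute)
  qed
qed

lemma frob_pair_unique:
  assumes "p \<ge> 1" "frob_pair p nv b ends u v" "frob_pair p nv b ends u w"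
  shows "v = w"
proof -
  have "{e. e < b \<and> (ends e = (u, v) \<or> ends e = (v, u))} \<noteq> {}"
    using assms(1,2) unfolding frob_pair_def by (metis card.empty not_one_le_zero)
  then obtain e where e: "e < b" "ends e = (u, v) \<or> ends e = (v, u)"
    by blast
  then have "ends e = (u, w) \<or> ends e = (w, u)"
    using assms(3) unfolding frob_pair_def by (auto simp: inc_def)
  then show ?thesis
    using e assms(2) unfolding frob_pair_def by auto
qed

lemma frob_pairs_disjoint:
  assumes "p \<ge> 1" "P \<in> frob_pairs p nv b ends" "Q \<in> frob_pairs p nv b ends" "P \<noteq> Q"
  shows "P \<inter> Q = {}"
proof (rule ccontr)
  assume "P \<inter> Q \<noteq> {}"
  then obtain u where "u \<in> P" "u \<in> Q" by blast
  with assms(2,3) obtain v w where "P = {u, v}" "frob_pair p nv b ends u v"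
    and "Q = {u, w}" "frob_pair p nv b ends u w"
    by (metis frob_pairsE)
  then show False using frob_pair_unique[OF assms(1)] assms(4) by blast
qed

lemma card_frob_pairs: "P \<in> frob_pairs p nv b ends \<Longrightarrow> card P = 2"
  unfolding frob_pairs_def frob_pair_def by auto

lemma finite_frob_pairs: "finite (frob_pairs p nv b ends)"
proof (rule finite_subset)
  show "frob_pairs p nv b ends \<subseteq> Pow {..<nv}"
    unfolding frob_pairs_def frob_pair_def by auto
qed simp

lemma frob_vertices_subset: "frob_vertices p nv b ends \<subseteq> {..<nv}"
  unfolding frob_vertices_def frob_pairs_def frob_pair_def by auto

lemma pair_labels_eq_star_labels:
  assumes "P \<in> frob_pairs p nv b ends" "u \<in> P"
  shows "pair_labels b ends i P = star_labels b ends i u"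
proof -
  obtain v where P: "P = {u, v}" and uv: "frob_pair p nv b ends u v"
    using frob_pairsE[OF assms] .
  define E where "E = {e. e < b \<and> fst (ends e) \<in> P \<and> snd (ends e) \<in> P}"
  have "e \<in> E \<longleftrightarrow> ends e = (u, v) \<or> ends e = (v, u)" if "e < b" for e
    using uv that unfolding E_def P frob_pair_def by (cases "ends e") (auto simp: inc_def)
  then have "star_labels b ends i u = image_mset i (mset_set E)"
    using inc_frob_pair[OF uv] by (intro star_labels_eq_image_mset) (auto simp: E_def)
  then show ?thesis
    by (simp add: pair_labels_def E_def)
qed

lemma pair_labels_eq_mset_set:
  assumes "inj_on i {..<b}"
  shows "pair_labels b ends i P = mset_set (i ` {e. e < b \<and> fst (ends e) \<in> P \<and> snd (ends e) \<in> P})"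
  unfolding pair_labels_def using assms by (intro image_mset_mset_set inj_on_subset[OF assms]) auto

lemma prod_star_labels_eq:
  fixes f :: "nat multiset \<Rightarrow> 'a::comm_monoid_mult"
  assumes "p \<ge> 1"
  shows "(\<Prod>v<nv. f (star_labels b ends i v)) =
    (\<Prod>v\<in>{..<nv} - frob_vertices p nv b ends. f (star_labels b ends i v)) *
    (\<Prod>P\<in>frob_pairs p nv b ends. f (pair_labels b ends i P) ^ 2)"
proof -
  have "(\<Prod>v<nv. f (star_labels b ends i v)) =
      (\<Prod>v\<in>{..<nv} - frob_vertices p nv b ends. f (star_labels b ends i v)) *
      (\<Prod>v\<in>frob_vertices p nv b ends. f (star_labels b ends i v))"
    using frob_vertices_subset by (intro prod.subset_diff) auto
  also have "(\<Prod>v\<in>frob_vertices p nv b ends. f (star_labels b ends i v)) =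
      (\<Prod>P\<in>frob_pairs p nv b ends. \<Prod>v\<in>P. f (star_labels b ends i v))"
  proof -
    have finite: "\<forall>P\<in>frob_pairs p nv b ends. finite P"
      using card_frob_pairs by (metis card_ge_0_finite zero_less_numeral)
    have disjoint: "\<forall>P\<in>frob_pairs p nv b ends. \<forall>Q\<in>frob_pairs p nv b ends. P \<noteq> Q \<longrightarrow> P \<inter> Q = {}"
      using frob_pairs_disjoint[OF assms] by blast
    show ?thesis
      unfolding frob_vertices_def using prod.Union_disjoint[OF finite disjoint] by (simp add: comp_def)
  qed
  also have "\<dots> = (\<Prod>P\<in>frob_pairs p nv b ends. f (pair_labels b ends i P) ^ 2)"
  proof (rule prod.cong[OF refl])
    fix P assume P: "P \<in> frob_pairs p nv b ends"
    have "(\<Prod>v\<in>P. f (star_labels b ends i v)) = (\<Prod>v\<in>P. f (pair_labels b ends i P))"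
      by (rule prod.cong) (simp_all add: pair_labels_eq_star_labels[OF P])
    then show "(\<Prod>v\<in>P. f (star_labels b ends i v)) = f (pair_labels b ends i P) ^ 2"
      using card_frob_pairs[OF P] by simp
  qed
  finally show ?thesis .
qed

lemma frob_pairs_subset_frob_vertices:
  "P \<in> frob_pairs p nv b ends \<Longrightarrow> u \<in> P \<Longrightarrow> u \<in> frob_vertices p nv b ends"
  unfolding frob_vertices_def by blast

lemma frob_pairs_nonempty:
  assumes "P \<in> frob_pairs p nv b ends"
  obtains u where "u \<in> P"
  using card_frob_pairs[OF assms] by fastforce

lemma inj_on_star_labels:
  assumes "regular p nv b ends" "inj_on i {..<b}"
  shows "inj_on (star_labels b ends i) ({..<nv} - frob_vertices p nv b ends)"
proof (rule inj_onI)
  fix u v assume u: "u \<in> {..<nv} - frob_vertices p nv b ends" and v: "v \<in> {..<nv} - frob_vertices p nv b ends"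
    and eq: "star_labels b ends i u = star_labels b ends i v"
  show "u = v"
  proof (rule ccontr)
    assume "u \<noteq> v"
    then have "frob_pair p nv b ends u v"
      using frob_pair_iff_star_labels_eq[OF assms] u v eq by simp
    then show False using frob_pair_in_frob_vertices u by blast
  qed
qed

lemma inj_on_pair_labels:
  assumes "p \<ge> 1" "regular p nv b ends" "inj_on i {..<b}"
  shows "inj_on (pair_labels b ends i) (frob_pairs p nv b ends)"
proof (rule inj_onI)
  fix P Q assume P: "P \<in> frob_pairs p nv b ends" and Q: "Q \<in> frob_pairs p nv b ends"
    and eq: "pair_labels b ends i P = pair_labels b ends i Q"
  obtain u w where u: "u \<in> P" and w: "w \<in> Q"
    using frob_pairs_nonempty[OF P] frob_pairs_nonempty[OF Q] by metis
  show "P = Q"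
  proof (rule ccontr)
    assume "P \<noteq> Q"
    then have "u \<noteq> w"
      using frob_pairs_disjoint[OF assms(1) P Q] u w by blast
    moreover have "u < nv" "w < nv"
      using frob_pairs_subset_frob_vertices[OF P u] frob_pairs_subset_frob_vertices[OF Q w]
        frob_vertices_subset by blast+
    moreover have "star_labels b ends i u = star_labels b ends i w"
      using eq pair_labels_eq_star_labels[OF P u] pair_labels_eq_star_labels[OF Q w] by simp
    ultimately have uw: "{u, w} \<in> frob_pairs p nv b ends"
      using frob_pair_iff_star_labels_eq[OF assms(2,3)] frob_pair_in_frob_pairs by blast
    have "{u, w} = P" "{u, w} = Q"
      using frob_pairs_disjoint[OF assms(1) uw P] frob_pairs_disjoint[OF assms(1) uw Q] u w by blast+
    then show False using \<open>P \<noteq> Q\<close> by simp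
  qed
qed

lemma star_labels_disjoint_pair_labels:
  assumes "regular p nv b ends" "inj_on i {..<b}"
  shows "star_labels b ends i ` ({..<nv} - frob_vertices p nv b ends) \<inter>
    pair_labels b ends i ` frob_pairs p nv b ends = {}"
proof -
  have False if v: "v \<in> {..<nv} - frob_vertices p nv b ends" and P: "P \<in> frob_pairs p nv b ends"
    and eq: "star_labels b ends i v = pair_labels b ends i P" for v P
  proof -
    obtain u where u: "u \<in> P" using frob_pairs_nonempty[OF P] .
    have "u \<in> frob_vertices p nv b ends"
      using frob_pairs_subset_frob_vertices[OF P u] .
    then have "v \<noteq> u" "u < nv"
      using v frob_vertices_subset by blast+
    moreover have "star_labels b ends i v = star_labels b ends i u"
      using eq pair_labels_eq_star_labels[OF P u] by simp
    ultimately have "frob_pair p nv b ends v u"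
      using frob_pair_iff_star_labels_eq[OF assms] v by simp
    then show False
      using frob_pair_in_frob_vertices v by blast
  qed
  then show ?thesis by blast
qed

lemma prod_star_labels_pair_labels:
  fixes f g :: "nat multiset \<Rightarrow> 'a::comm_monoid_mult"
  assumes "p \<ge> 1" "regular p nv b ends" "inj_on i {..<b}"
  defines "A \<equiv> star_labels b ends i ` ({..<nv} - frob_vertices p nv b ends)"
    and "B \<equiv> pair_labels b ends i ` frob_pairs p nv b ends"
  shows "(\<Prod>X\<in>A \<union> B. if X \<in> A then f X else g X) =
    (\<Prod>v\<in>{..<nv} - frob_vertices p nv b ends. f (star_labels b ends i v)) *
    (\<Prod>P\<in>frob_pairs p nv b ends. g (pair_labels b ends i P))"
proof -
  have "A \<inter> B = {}"
    unfolding A_def B_def by (rule star_labels_disjoint_pair_labels[OF assms(2,3)])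
  moreover have "finite A" "finite B"
    by (simp_all add: A_def B_def finite_frob_pairs)
  ultimately have "(\<Prod>X\<in>A \<union> B. if X \<in> A then f X else g X) = (\<Prod>X\<in>A. f X) * (\<Prod>X\<in>B. g X)"
    by (auto simp: prod.union_disjoint intro!: arg_cong2[where f = times] prod.cong)
  then show ?thesis
    using inj_on_star_labels[OF assms(2,3)] inj_on_pair_labels[OF assms(1-3)]
    by (simp add: A_def B_def prod.reindex)
qed

lemma star_labels_in_index_msets:
  assumes "regular p nv b ends" "i \<in> dist_labelings n b" "v < nv"
  shows "star_labels b ends i v \<in> index_msets p n"
  using assms size_star_labels set_star_labels_subset
  by (simp add: index_msets_def dist_labelings_def)

lemma pair_labels_in_index_msets:
  assumes "regular p nv b ends" "i \<in> dist_labelings n b" "P \<in> frob_pairs p nv b ends"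
  shows "pair_labels b ends i P \<in> index_msets p n"
proof -
  obtain u where u: "u \<in> P"
    using frob_pairs_nonempty[OF assms(3)] .
  have "u < nv"
    using frob_pairs_subset_frob_vertices[OF assms(3) u] frob_vertices_subset by blast
  then show ?thesis
    using star_labels_in_index_msets[OF assms(1,2)] pair_labels_eq_star_labels[OF assms(3) u] by simp
qed

section \<open>Expectation of the centred moment\<close>

lemma
  assumes "regular p nv b ends" "i \<in> dist_labelings n b" "P \<in> frob_pairs p nv b ends"
  shows integrable_frob_pair_factor:
      "integrable (gauss_space p n) (\<lambda>G. (a + wig p G (pair_labels b ends i P))\<^sup>2 - 1)"
    and integral_frob_pair_factor:
      "(\<integral>G. (a + wig p G (pair_labels b ends i P))\<^sup>2 - 1 \<partial>gauss_space p n) = a\<^sup>2"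
proof -
  define E where "E = i ` {e. e < b \<and> fst (ends e) \<in> P \<and> snd (ends e) \<in> P}"
  have "pair_labels b ends i P = mset_set E" "finite E"
    using assms(2) by (simp_all add: pair_labels_eq_mset_set dist_labelings_def E_def)
  moreover have "card E = p" "E \<subseteq> {..<n}"
    using pair_labels_in_index_msets[OF assms] calculation by (simp_all add: index_msets_def)
  ultimately show "integrable (gauss_space p n) (\<lambda>G. (a + wig p G (pair_labels b ends i P))\<^sup>2 - 1)"
    and "(\<integral>G. (a + wig p G (pair_labels b ends i P))\<^sup>2 - 1 \<partial>gauss_space p n) = a\<^sup>2"
    using integrable_shifted_wig_square integral_shifted_wig_square by simp_all
qed

definition m_c_term ::
    "nat \<Rightarrow> nat \<Rightarrow> nat \<Rightarrow> (nat \<Rightarrow> nat \<times> nat) \<Rightarrow> (nat multiset \<Rightarrow> real) \<Rightarrow> (nat \<Rightarrow> nat) \<Rightarrow> real" where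
  "m_c_term p nv b ends T i =
    (\<Prod>v\<in>{..<nv} - frob_vertices p nv b ends. T (star_labels b ends i v)) *
    (\<Prod>P\<in>frob_pairs p nv b ends. (T (pair_labels b ends i P))\<^sup>2 - 1)"

lemma m_c_eq_sum_m_c_term: "m_c p n nv b ends T = (\<Sum>i\<in>dist_labelings n b. m_c_term p nv b ends T i)"
  by (simp add: m_c_def m_c_term_def)

lemma
  assumes "p \<ge> 1" "regular p nv b ends" "i \<in> dist_labelings n b"
  shows integrable_m_c_term_wig:
      "integrable (gauss_space p n) (\<lambda>G. m_c_term p nv b ends (\<lambda>S. T S + wig p G S) i)"
    and integral_m_c_term_wig:
      "(\<integral>G. m_c_term p nv b ends (\<lambda>S. T S + wig p G S) i \<partial>gauss_space p n) =
        (\<Prod>v<nv. T (star_labels b ends i v))"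
proof -
  have inj: "inj_on i {..<b}"
    using assms(3) by (simp add: dist_labelings_def)
  define A where "A = star_labels b ends i ` ({..<nv} - frob_vertices p nv b ends)"
  define B where "B = pair_labels b ends i ` frob_pairs p nv b ends"
  define h where "h X x = (if X \<in> A then T X + x else (T X + x)\<^sup>2 - 1)" for X x
  note prod_A_B = prod_star_labels_pair_labels[OF assms(1,2) inj, folded A_def B_def]
  have term_eq: "m_c_term p nv b ends (\<lambda>S. T S + wig p G S) i = (\<Prod>X\<in>A \<union> B. h X (wig p G X))" for G
    by (simp add: h_def prod_A_B m_c_term_def)
  have factor: "integrable (gauss_space p n) (\<lambda>G. h X (wig p G X)) \<and>
      (\<integral>G. h X (wig p G X) \<partial>gauss_space p n) = (if X \<in> A then T X else (T X)\<^sup>2)"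
    if X: "X \<in> A \<union> B" for X
  proof (cases "X \<in> A")
    case True
    then obtain v where "v < nv" "X = star_labels b ends i v"
      by (auto simp: A_def)
    then show ?thesis
      using True star_labels_in_index_msets[OF assms(2,3)] integrable_shifted_wig integral_shifted_wig
      by (simp add: h_def)
  next
    case False
    then obtain P where "P \<in> frob_pairs p nv b ends" "X = pair_labels b ends i P"
      using X by (auto simp: B_def)
    then show ?thesis
      using False integrable_frob_pair_factor[OF assms(2,3)] integral_frob_pair_factor[OF assms(2,3)]
      by (simp add: h_def)
  qed
  have finite: "finite (A \<union> B)"
    by (simp add: A_def B_def finite_frob_pairs)
  have index: "A \<union> B \<subseteq> index_msets p n"
    using star_labels_in_index_msets[OF assms(2,3)] pair_labels_in_index_msets[OF assms(2,3)]
    by (auto simp: A_def B_def)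
  have measurable: "h X \<in> borel_measurable borel" for X
    unfolding h_def by (cases "X \<in> A") simp_all
  note product = integrable_prod_wig[OF finite index measurable factor[THEN conjunct1]]
    integral_prod_wig[OF finite index measurable factor[THEN conjunct1]]
  then show "integrable (gauss_space p n) (\<lambda>G. m_c_term p nv b ends (\<lambda>S. T S + wig p G S) i)"
    by (simp add: term_eq)
  have "(\<integral>G. m_c_term p nv b ends (\<lambda>S. T S + wig p G S) i \<partial>gauss_space p n) =
      (\<Prod>X\<in>A \<union> B. \<integral>G. h X (wig p G X) \<partial>gauss_space p n)"
    using product by (simp add: term_eq)
  also have "\<dots> = (\<Prod>X\<in>A \<union> B. if X \<in> A then T X else (T X)\<^sup>2)"
    using factor by (intro prod.cong) auto
  also have "\<dots> = (\<Prod>v<nv. T (star_labels b ends i v))"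
    by (simp add: prod_A_B prod_star_labels_eq[OF assms(1)])
  finally show "(\<integral>G. m_c_term p nv b ends (\<lambda>S. T S + wig p G S) i \<partial>gauss_space p n) =
      (\<Prod>v<nv. T (star_labels b ends i v))" .
qed

theorem proposition4p6:
  fixes p n nv b :: nat and ends :: "nat \<Rightarrow> nat \<times> nat" and T :: "nat multiset \<Rightarrow> real"
  assumes "p \<ge> 1"
    and "multigraph nv b ends"
    and "regular p nv b ends"
  shows "integrable (gauss_space p n) (\<lambda>G. m_c p n nv b ends (\<lambda>S. T S + wig p G S))
     \<and> (\<integral>G. m_c p n nv b ends (\<lambda>S. T S + wig p G S) \<partial>gauss_space p n) = m_inj n nv b ends T"
  using integrable_m_c_term_wig[OF assms(1,3)] integral_m_c_term_wig[OF assms(1,3)]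
  by (simp add: m_c_eq_sum_m_c_term m_inj_def Bochner_Integration.integral_sum)

end
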